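(* As formal power series, $$1+\frac{q^2+q^3}{1-q^2}+\sum_{n\ge2}\frac{(-q^3;q^4)_{n-1}\,q^{2n}(1+q^{2n-1})}{(q^2;q^2)_n}=\prod_{\substack{n\ge1\\ n\not\equiv1,5,6\ (\mathrm{mod}\ 8)}}\frac{1}{1-q^n}.$$
   Context: $(a;q)_n=\prod_{j=0}^{n-1}(1-aq^j)$. *)

theory Defs
  imports "HOL-Analysis.Analysis" "HOL-Computational_Algebra.Formal_Power_Series"
begin

definition qpoch :: "'a::comm_ring_1 \<Rightarrow> 'a \<Rightarrow> nat \<Rightarrow> 'a" where
  "qpoch a q n = (\<Prod>j<n. (1 - a * q ^ j))"

end

theory Submission
  imports Defs
begin

unbundle no vec_syntax
unbundle fps_syntax

text \<open>
  Put \<open>b\<^sub>N = (-q\<^sup>3;q\<^sup>4)\<^sub>N / (q\<^sup>2;q\<^sup>2)\<^sub>N\<close>. The \<open>n\<close>-th summand equals \<open>b\<^sub>n - b\<^sub>n\<^sub>-\<^sub>1\<close>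
  and the initial term \<open>1 + (q\<^sup>2 + q\<^sup>3) / (1 - q\<^sup>2)\<close> is \<open>b\<^sub>1\<close>, so the left-hand side
  is \<open>lim b\<^sub>N\<close>. Multiplying numerator and denominator by \<open>(q\<^sup>3;q\<^sup>4)\<^sub>N\<close> gives
  \<open>b\<^sub>N = (q\<^sup>6;q\<^sup>8)\<^sub>N / ((q\<^sup>2;q\<^sup>2)\<^sub>N (q\<^sup>3;q\<^sup>4)\<^sub>N)\<close>, and modulo \<open>q\<^sup>N\<^sup>+\<^sup>1\<close> each of these
  finite products already contains every factor \<open>1 - q\<^sup>k\<close> with \<open>k \<le> N\<close> of its infinite
  version. The exponents \<open>k \<equiv> 6 (mod 8)\<close> of the numerator cancel against the
  denominator, whose exponents are the \<open>k \<equiv> 0, 2, 3, 4, 6, 7 (mod 8)\<close>; what remains is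
  the reciprocal of the product over \<open>k \<not>\<equiv> 1, 5, 6 (mod 8)\<close>, up to \<open>q\<^sup>N\<^sup>+\<^sup>1\<close>.
\<close>

lemma qpoch_Suc: "qpoch a q (Suc n) = qpoch a q n * (1 - a * q ^ n)"
  by (simp add: qpoch_def)

lemma qpoch_neg_mult_qpoch: "qpoch (- a) q n * qpoch a q n = qpoch (a\<^sup>2) (q\<^sup>2) n"
  unfolding qpoch_def prod.distrib[symmetric]
  by (intro prod.cong refl) (simp add: algebra_simps power2_eq_square power_mult_distrib flip: power_mult)

lemma qpoch_telescoping_step:
  fixes q :: "'a::comm_ring_1"
  shows "qpoch (- (q ^ 3)) (q ^ 4) (n + 1) * q ^ (2 * (n + 2)) * (1 + q ^ (2 * (n + 2) - 1))
       = qpoch (- (q ^ 3)) (q ^ 4) (n + 2) - qpoch (- (q ^ 3)) (q ^ 4) (n + 1) * (1 - q ^ (2 * (n + 2)))"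
proof -
  have "3 + 4 * (n + 1) = 2 * (n + 2) + (2 * (n + 2) - 1)"
    by simp
  then have "q ^ 3 * (q ^ 4) ^ (n + 1) = q ^ (2 * (n + 2)) * q ^ (2 * (n + 2) - 1)"
    by (metis power_add power_mult)
  moreover have "qpoch (- (q ^ 3)) (q ^ 4) (n + 2)
      = qpoch (- (q ^ 3)) (q ^ 4) (n + 1) * (1 + q ^ 3 * (q ^ 4) ^ (n + 1))"
    using qpoch_Suc[of "- (q ^ 3)" "q ^ 4" "n + 1"] by simp
  ultimately show ?thesis
    by (simp add: algebra_simps)
qed

lemma fps_nth_0_prod: "(\<Prod>i\<in>I. f i) $ 0 = (\<Prod>i\<in>I. f i $ 0 :: 'a::comm_semiring_1)"
  by (induction I rule: infinite_finite_induct) auto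

lemma qpoch_fps_X_power_nth_0: "0 < k \<Longrightarrow> qpoch (fps_X ^ k) q n $ 0 = (1 :: 'a::comm_ring_1)"
  by (simp add: qpoch_def fps_nth_0_prod)

section \<open>Agreement of power series up to a given degree\<close>

definition fps_eq_upto :: "nat \<Rightarrow> 'a::comm_semiring_1 fps \<Rightarrow> 'a fps \<Rightarrow> bool" where
  "fps_eq_upto N f g \<longleftrightarrow> (\<forall>i\<le>N. f $ i = g $ i)"

lemma fps_eq_upto_refl [simp]: "fps_eq_upto N f f"
  by (simp add: fps_eq_upto_def)

lemma fps_eq_upto_sym: "fps_eq_upto N f g \<Longrightarrow> fps_eq_upto N g f"
  by (simp add: fps_eq_upto_def)

lemma fps_eq_upto_trans [trans]: "fps_eq_upto N f g \<Longrightarrow> fps_eq_upto N g h \<Longrightarrow> fps_eq_upto N f h"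
  by (simp add: fps_eq_upto_def)

lemma fps_eq_upto_mult:
  assumes "fps_eq_upto N f f'" "fps_eq_upto N g g'"
  shows "fps_eq_upto N (f * g) (f' * g')"
  using assms by (auto simp: fps_eq_upto_def fps_mult_nth intro!: sum.cong)

lemma fps_eq_upto_prod:
  "(\<And>i. i \<in> I \<Longrightarrow> fps_eq_upto N (f i) (g i)) \<Longrightarrow> fps_eq_upto N (\<Prod>i\<in>I. f i) (\<Prod>i\<in>I. g i)"
  by (induction I rule: infinite_finite_induct) (auto intro: fps_eq_upto_mult)

lemma fps_eq_upto_one_minus_fps_X_power:
  "N < k \<Longrightarrow> fps_eq_upto N (1 - fps_X ^ k :: 'a::comm_ring_1 fps) 1"
  by (simp add: fps_eq_upto_def fps_X_power_iff)

lemma fps_eq_upto_cancel: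
  fixes f g w :: "'a::comm_ring_1 fps"
  assumes "w * w' = 1" "fps_eq_upto N (f * w) (g * w)"
  shows "fps_eq_upto N f g"
  using fps_eq_upto_mult[OF assms(2) fps_eq_upto_refl[of N w']] assms(1)
  by (simp add: mult.assoc)

lemma fps_eq_upto_reciprocal:
  fixes f g u v :: "'a::comm_ring_1 fps"
  assumes "fps_eq_upto N (f * u) 1" "fps_eq_upto N (g * v) 1" "fps_eq_upto N u v"
  shows "fps_eq_upto N f g"
proof -
  have "fps_eq_upto N f (f * (g * v))"
    using fps_eq_upto_mult[OF fps_eq_upto_refl fps_eq_upto_sym[OF assms(2)]] by simp
  also have "f * (g * v) = g * (f * v)"
    by (simp add: ac_simps)
  also have "fps_eq_upto N \<dots> (g * (f * u))"
    by (intro fps_eq_upto_mult fps_eq_upto_refl fps_eq_upto_sym[OF assms(3)])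
  also have "fps_eq_upto N \<dots> g"
    using fps_eq_upto_mult[OF fps_eq_upto_refl assms(1)] by simp
  finally show ?thesis .
qed

lemma fps_eq_upto_diagonal:
  assumes "\<And>N M. N \<le> M \<Longrightarrow> fps_eq_upto N (f M) (f N)"
  shows "fps_eq_upto N (f N) (Abs_fps (\<lambda>i. f i $ i))"
  using assms by (simp add: fps_eq_upto_def)

lemma tendsto_fps_eq_upto:
  assumes "\<And>N. fps_eq_upto N (f N) L"
  shows "f \<longlonglongrightarrow> (L :: 'a::comm_ring_1 fps)"
proof (rule tendsto_fpsI)
  fix i
  show "\<forall>\<^sub>F N in sequentially. f N $ i = L $ i"
    using eventually_ge_at_top[of i] by eventually_elim (use assms in \<open>simp add: fps_eq_upto_def\<close>)
qed

lemma fps_telescope_sums: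
  assumes "f \<longlonglongrightarrow> (c :: 'a::comm_ring_1 fps)"
  shows "(\<lambda>n. f (Suc n) - f n) sums (c - f 0)"
  unfolding sums_def sum_lessThan_telescope
proof (rule tendsto_fpsI)
  fix i
  show "\<forall>\<^sub>F n in sequentially. (f n - f 0) $ i = (c - f 0) $ i"
    using assms unfolding tendsto_fps_iff by (auto elim: eventually_mono)
qed

lemma has_prod_of_tendsto_prod_lessThan:
  assumes "(\<lambda>N. \<Prod>n<N. f n) \<longlonglongrightarrow> P" "P \<noteq> 0"
  shows "f has_prod P"
proof -
  have "(\<lambda>N. \<Prod>n<Suc N. f n) \<longlonglongrightarrow> P"
    using LIMSEQ_Suc[OF assms(1)] .
  then show ?thesis
    using assms(2) by (simp add: has_prod_def raw_has_prod_def lessThan_Suc_atMost)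
qed

definition prod_one_minus_X :: "nat set \<Rightarrow> 'a::comm_ring_1 fps" where
  "prod_one_minus_X S = (\<Prod>k\<in>S. 1 - fps_X ^ k)"

lemma prod_one_minus_X_union:
  "finite A \<Longrightarrow> finite B \<Longrightarrow> A \<inter> B = {} \<Longrightarrow>
     prod_one_minus_X (A \<union> B) = prod_one_minus_X A * prod_one_minus_X B"
  unfolding prod_one_minus_X_def by (rule prod.union_disjoint)

lemma fps_eq_upto_prod_one_minus_X_truncate:
  assumes "finite S"
  shows "fps_eq_upto N (prod_one_minus_X S) (prod_one_minus_X (S \<inter> {..N}) :: 'a::comm_ring_1 fps)"
proof -
  have split: "prod_one_minus_X S = prod_one_minus_X (S \<inter> {..N}) * prod_one_minus_X (S - {..N})"
    using assms by (subst prod_one_minus_X_union[symmetric]) (auto intro: arg_cong[of _ _ prod_one_minus_X])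
  have "fps_eq_upto N (prod_one_minus_X (S - {..N})) (\<Prod>k\<in>S - {..N}. (1 :: 'a fps))"
    unfolding prod_one_minus_X_def by (intro fps_eq_upto_prod fps_eq_upto_one_minus_fps_X_power) auto
  then have "fps_eq_upto N (prod_one_minus_X (S \<inter> {..N}) * prod_one_minus_X (S - {..N}))
      (prod_one_minus_X (S \<inter> {..N}) * 1 :: 'a fps)"
    by (intro fps_eq_upto_mult fps_eq_upto_refl) simp
  then show ?thesis
    by (subst split) simp
qed

text \<open>Since \<open>k + d (N - 1) \<ge> N\<close>, the \<open>N\<close> factors of \<open>(X\<^sup>k;X\<^sup>d)\<^sub>N\<close> include all those of degree \<open>\<le> N\<close>.\<close>

lemma fps_eq_upto_qpoch_fps_X_power:
  assumes "0 < k" "0 < d"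
  shows "fps_eq_upto N (qpoch (fps_X ^ k) (fps_X ^ d) N)
           (prod_one_minus_X {j. k \<le> j \<and> j \<le> N \<and> j mod d = k mod d} :: 'a::comm_ring_1 fps)"
proof -
  have inj: "inj (\<lambda>i. k + d * i)"
    using assms by (auto intro: injI)
  have "qpoch (fps_X ^ k) (fps_X ^ d) N = (prod_one_minus_X ((\<lambda>i. k + d * i) ` {..<N}) :: 'a fps)"
    unfolding qpoch_def prod_one_minus_X_def
    by (subst prod.reindex[OF inj_on_subset[OF inj]]) (simp_all add: power_add power_mult)
  also have "fps_eq_upto N \<dots> (prod_one_minus_X ((\<lambda>i. k + d * i) ` {..<N} \<inter> {..N}))"
    by (intro fps_eq_upto_prod_one_minus_X_truncate) simp
  also have "(\<lambda>i. k + d * i) ` {..<N} \<inter> {..N} = {j. k \<le> j \<and> j \<le> N \<and> j mod d = k mod d}"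
  proof (intro set_eqI iffI)
    fix j assume j: "j \<in> {j. k \<le> j \<and> j \<le> N \<and> j mod d = k mod d}"
    then have "d dvd j - k"
      using mod_eq_dvd_iff_nat[of k j d] by simp
    then obtain i where "j - k = d * i"
      by (elim dvdE)
    then have i: "j = k + d * i"
      using j by auto
    have "i \<le> d * i"
      using assms by simp
    moreover have "k + d * i \<le> N"
      using i j by simp
    ultimately have "i < N"
      using assms by linarith
    with i j show "j \<in> (\<lambda>i. k + d * i) ` {..<N} \<inter> {..N}"
      by blast
  next
    fix j assume "j \<in> (\<lambda>i. k + d * i) ` {..<N} \<inter> {..N}"
    then obtain i where "j = k + d * i" "j \<le> N"
      by blast
    then show "j \<in> {j. k \<le> j \<and> j \<le> N \<and> j mod d = k mod d}"
      by simp
  qed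
  finally show ?thesis .
qed

section \<open>The two sides of the identity\<close>

definition qpoch_quotient :: "nat \<Rightarrow> rat fps" where
  "qpoch_quotient N = qpoch (- (fps_X ^ 3)) (fps_X ^ 4) N / qpoch (fps_X ^ 2) (fps_X ^ 2) N"

lemma summand_eq_qpoch_quotient_diff:
  "qpoch (- (fps_X ^ 3)) (fps_X ^ 4) (n + 1) * fps_X ^ (2 * (n + 2)) * (1 + fps_X ^ (2 * (n + 2) - 1))
     / qpoch (fps_X ^ 2) (fps_X ^ 2) (n + 2) = qpoch_quotient (n + 2) - qpoch_quotient (n + 1)"
proof -
  let ?A = "qpoch (- (fps_X ^ 3)) (fps_X ^ 4) :: nat \<Rightarrow> rat fps"
  let ?D = "qpoch (fps_X ^ 2) (fps_X ^ 2) :: nat \<Rightarrow> rat fps"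
  have units: "is_unit (?D m)" for m
    by (simp add: qpoch_fps_X_power_nth_0)
  have "2 + 2 * (n + 1) = 2 * (n + 2)"
    by simp
  then have power: "fps_X ^ 2 * (fps_X ^ 2) ^ (n + 1) = (fps_X ^ (2 * (n + 2)) :: rat fps)"
    by (metis power_add power_mult)
  have "n + 2 = Suc (n + 1)"
    by simp
  then have D: "?D (n + 2) = ?D (n + 1) * (1 - fps_X ^ (2 * (n + 2)))"
    by (simp only: qpoch_Suc power)
  have b2: "qpoch_quotient (n + 2) * ?D (n + 2) = ?A (n + 2)"
    unfolding qpoch_quotient_def by (rule unit_div_mult_self[OF units])
  have b1: "qpoch_quotient (n + 1) * ?D (n + 2) = ?A (n + 1) * (1 - fps_X ^ (2 * (n + 2)))"
    by (simp only: D qpoch_quotient_def mult.assoc[symmetric] unit_div_mult_self units)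
  show ?thesis
    by (simp only: unit_eq_div1[OF units] left_diff_distrib b1 b2 qpoch_telescoping_step)
qed

lemma qpoch_quotient_1: "qpoch_quotient 1 = 1 + (fps_X ^ 2 + fps_X ^ 3) / (1 - fps_X ^ 2)"
proof -
  have unit: "is_unit (1 - fps_X ^ 2 :: rat fps)"
    by simp
  have "(1 + (fps_X ^ 2 + fps_X ^ 3) / (1 - fps_X ^ 2)) * (1 - fps_X ^ 2)
      = (1 - fps_X ^ 2) + (fps_X ^ 2 + fps_X ^ 3) / (1 - fps_X ^ 2) * (1 - fps_X ^ 2 :: rat fps)"
    by (simp only: distrib_right mult_1_left)
  also have "\<dots> = 1 + fps_X ^ 3"
    by (simp only: unit_div_mult_self[OF unit]) simp
  finally have "(1 + fps_X ^ 3) / (1 - fps_X ^ 2) = 1 + (fps_X ^ 2 + fps_X ^ 3) / (1 - fps_X ^ 2 :: rat fps)"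
    by (subst unit_eq_div1[OF unit]) (rule sym)
  then show ?thesis
    by (simp add: qpoch_quotient_def qpoch_def)
qed

definition allowed_exponents :: "nat \<Rightarrow> nat set" where
  "allowed_exponents N = {k. 0 < k \<and> k \<le> N \<and> k mod 8 \<notin> {1, 5, 6}}"

definition product_factor :: "nat \<Rightarrow> rat fps" where
  "product_factor n = (if (n + 1) mod 8 \<in> {1, 5, 6} then 1 else 1 / (1 - fps_X ^ (n + 1)))"

lemma finite_allowed_exponents: "finite (allowed_exponents N)"
  by (rule finite_subset[of _ "{..N}"]) (auto simp: allowed_exponents_def)

lemma allowed_exponents_truncate: "N \<le> M \<Longrightarrow> allowed_exponents M \<inter> {..N} = allowed_exponents N"
  by (auto simp: allowed_exponents_def)

lemma prod_product_factor_mult_prod_one_minus_X: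
  "(\<Prod>n<N. product_factor n) * prod_one_minus_X (allowed_exponents N) = 1"
proof (induction N)
  case 0
  have "allowed_exponents 0 = {}"
    by (auto simp: allowed_exponents_def)
  then show ?case
    by (simp add: prod_one_minus_X_def)
next
  case (Suc N)
  show ?case
  proof (cases "Suc N mod 8 \<in> {1, 5, 6}")
    case True
    then have "allowed_exponents (Suc N) = allowed_exponents N"
      by (auto simp: allowed_exponents_def le_Suc_eq)
    with Suc True show ?thesis
      by (simp add: product_factor_def)
  next
    case False
    then have "allowed_exponents (Suc N) = insert (Suc N) (allowed_exponents N)"
      by (auto simp: allowed_exponents_def le_Suc_eq)
    then have E: "prod_one_minus_X (allowed_exponents (Suc N))
        = (1 - fps_X ^ Suc N) * prod_one_minus_X (allowed_exponents N)"
      using finite_allowed_exponents by (simp add: prod_one_minus_X_def allowed_exponents_def)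
    have "(\<Prod>n<Suc N. product_factor n) * prod_one_minus_X (allowed_exponents (Suc N))
        = ((\<Prod>n<N. product_factor n) * prod_one_minus_X (allowed_exponents N))
          * (product_factor N * (1 - fps_X ^ Suc N))"
      unfolding prod.lessThan_Suc E by (simp only: ac_simps)
    moreover have "product_factor N * (1 - fps_X ^ Suc N) = 1"
      using False by (simp add: product_factor_def unit_div_mult_self)
    ultimately show ?thesis
      using Suc.IH by (simp only: mult_1_right)
  qed
qed

lemma prod_product_factor_stable:
  assumes "N \<le> M"
  shows "fps_eq_upto N (\<Prod>n<M. product_factor n) (\<Prod>n<N. product_factor n)"
proof (rule fps_eq_upto_reciprocal)
  show "fps_eq_upto N (prod_one_minus_X (allowed_exponents M)) (prod_one_minus_X (allowed_exponents N))"
    using fps_eq_upto_prod_one_minus_X_truncate[OF finite_allowed_exponents[of M], of N]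
    unfolding allowed_exponents_truncate[OF assms] .
qed (simp_all add: prod_product_factor_mult_prod_one_minus_X)

lemma qpoch_quotient_mult_prod_one_minus_X:
  "fps_eq_upto N (qpoch_quotient N * prod_one_minus_X (allowed_exponents N)) 1"
proof -
  let ?A = "qpoch (- (fps_X ^ 3)) (fps_X ^ 4) N :: rat fps"
  let ?C = "qpoch (fps_X ^ 3) (fps_X ^ 4) N :: rat fps"
  let ?D = "qpoch (fps_X ^ 2) (fps_X ^ 2) N :: rat fps"
  let ?T = "allowed_exponents N"
  define U where "U = {k. 0 < k \<and> k \<le> N \<and> k mod 8 \<notin> {1, 5}}"
  let ?R = "\<lambda>k d. {j. k \<le> j \<and> j \<le> N \<and> j mod d = k mod d}"
  have finite: "finite (?R k d)" for k d
    by (rule finite_subset[of _ "{..N}"]) auto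
  have "?A * ?C = qpoch (fps_X ^ 6) (fps_X ^ 8) N"
    using qpoch_neg_mult_qpoch[of "fps_X ^ 3" "fps_X ^ 4" N] by (simp flip: power_mult)
  then have "fps_eq_upto N (?A * ?C) (prod_one_minus_X (?R 6 8))"
    using fps_eq_upto_qpoch_fps_X_power[of 6 8 N] by simp
  then have "fps_eq_upto N (?A * ?C * prod_one_minus_X ?T) (prod_one_minus_X (?R 6 8) * prod_one_minus_X ?T)"
    by (intro fps_eq_upto_mult fps_eq_upto_refl)
  also have "prod_one_minus_X (?R 6 8) * prod_one_minus_X ?T = prod_one_minus_X U"
  proof -
    have disjoint: "?R 6 8 \<inter> ?T = {}"
      by (auto simp: allowed_exponents_def)
    have "?R 6 8 \<union> ?T = U"
      by (auto simp: U_def allowed_exponents_def)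
    then have "prod_one_minus_X U = prod_one_minus_X (?R 6 8) * prod_one_minus_X ?T"
      using prod_one_minus_X_union[OF finite finite_allowed_exponents disjoint] by simp
    then show ?thesis
      by (rule sym)
  qed
  also have "prod_one_minus_X U = prod_one_minus_X (?R 2 2) * prod_one_minus_X (?R 3 4)"
  proof -
    have disjoint: "?R 2 2 \<inter> ?R 3 4 = {}"
      by auto presburger
    have "?R 2 2 \<union> ?R 3 4 = U"
      by (auto simp: U_def) presburger+
    then show ?thesis
      using prod_one_minus_X_union[OF finite finite disjoint] by simp
  qed
  also have "fps_eq_upto N \<dots> (?D * ?C)"
    by (intro fps_eq_upto_mult; rule fps_eq_upto_sym, rule fps_eq_upto_qpoch_fps_X_power) simp_all
  also have "?D * ?C = 1 * (?D * ?C)"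
    by simp
  finally have numerator: "fps_eq_upto N (?A * ?C * prod_one_minus_X ?T) (1 * (?D * ?C))" .
  have "qpoch_quotient N * prod_one_minus_X ?T * (?D * ?C)
      = (qpoch_quotient N * ?D) * ?C * prod_one_minus_X ?T"
    by (simp only: ac_simps)
  also have "qpoch_quotient N * ?D = ?A"
    unfolding qpoch_quotient_def by (rule unit_div_mult_self) (simp add: qpoch_fps_X_power_nth_0)
  finally have "fps_eq_upto N (qpoch_quotient N * prod_one_minus_X ?T * (?D * ?C)) (1 * (?D * ?C))"
    using numerator by (simp only:)
  moreover have "(?D * ?C) * inverse (?D * ?C) = 1"
    by (simp add: inverse_mult_eq_1' qpoch_fps_X_power_nth_0)
  ultimately show ?thesis
    by (rule fps_eq_upto_cancel[rotated])
qed

lemma qpoch_quotient_eq_upto_prod_product_factor: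
  "fps_eq_upto N (qpoch_quotient N) (\<Prod>n<N. product_factor n)"
  by (rule fps_eq_upto_reciprocal[OF qpoch_quotient_mult_prod_one_minus_X _ fps_eq_upto_refl])
    (simp add: prod_product_factor_mult_prod_one_minus_X)

theorem theorem12:
  shows "let q = (fps_X :: rat fps) in \<exists>S. (\<lambda>n. qpoch (- (q ^ 3)) (q^4) (n + 1) * q ^ (2 * (n + 2)) * (1 + q ^ (2 * (n + 2) - 1))
                    / qpoch (q^2) (q^2) (n + 2)) sums S
          \<and> (\<lambda>n. if (n + 1) mod 8 \<in> {1, 5, 6} then 1 else 1 / (1 - q ^ (n + 1)))
              has_prod (1 + (q^2 + q^3) / (1 - q^2) + S)"
proof -
  define P where "P = Abs_fps (\<lambda>i. (\<Prod>n<i. product_factor n) $ i)"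
  have partial_products: "fps_eq_upto N (\<Prod>n<N. product_factor n) P" for N
    unfolding P_def by (intro fps_eq_upto_diagonal prod_product_factor_stable)
  have "P $ 0 = 1"
    using partial_products[of 0] by (simp add: fps_eq_upto_def)
  then have "product_factor has_prod P"
    by (intro has_prod_of_tendsto_prod_lessThan tendsto_fps_eq_upto partial_products) auto
  moreover have "qpoch_quotient \<longlonglongrightarrow> P"
    by (intro tendsto_fps_eq_upto fps_eq_upto_trans[OF qpoch_quotient_eq_upto_prod_product_factor partial_products])
  then have "(\<lambda>n. qpoch_quotient (n + 2) - qpoch_quotient (n + 1)) sums (P - qpoch_quotient 1)"
    using fps_telescope_sums[OF LIMSEQ_Suc] by simp
  ultimately show ?thesis
    unfolding Let_def summand_eq_qpoch_quotient_diff product_factor_def[abs_def, symmetric]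
      qpoch_quotient_1[symmetric]
    by (intro exI[of _ "P - qpoch_quotient 1"]) simp
qed

end
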